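(* Let $(S^{(n)})$ be a sequence of $n\times n$ matrices with non-negative entries satisfying Assumption 2. Then for every $\varepsilon\in(0,1]$, \[ \sup_n\operatorname{perm}\left(I_n+(1-\varepsilon)S^{(n)}\right)<\infty, \] where $\operatorname{perm}$ denotes the permanent.
   Context: Assumption 2: for each $\varepsilon\in(0,1]$, $\liminf_n\min_{\gamma\in[0,1-\varepsilon]}\det(I_n-\gamma S^{(n)})>0$. *)

theory Defs
  imports "Jordan_Normal_Form.Determinant" "HOL-Library.Extended_Real" "HOL-Library.Liminf_Limsup"
begin

definition perm :: "'a mat \<Rightarrow> 'a :: comm_semiring_1" where
  "perm A = (if dim_row A = dim_col A then (\<Sum> p \<in> {p. p permutes {0 ..< dim_row A}}.
     (\<Prod> i = 0 ..< dim_row A. A $$ (i, p i))) else 0)"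

end

theory Submission
  imports Defs
begin

(*
  Put B = (1 - eps) S. If det (1 - gamma B) > 0 for all gamma in [0, 1], a connectedness argument
  shows that all leading principal minors D_k of 1 - B are positive. Bordering then yields
  entrywise nonnegative inverses of the leading blocks of 1 - B, and D_(k+1) = D_k s_k with Schur
  complements 0 < s_k <= 1. Expanding the permanent P_(k+1) of the leading block of 1 + B along
  its last row and following the cycle through the new index gives P_(k+1) <= P_k (2 - s_k),
  because weights of walks inside the block are dominated by its nonnegative inverse. Since
  (2 - s) s <= 1, we get P_n D_n <= 1, i.e. perm (1 + B) <= 1 / det (1 - B), and Assumption 2
  bounds det (1 - gamma S) for gamma <= 1 - eps away from 0 for all large n.
*)

lemma sum_of_bool_delta:
  fixes f :: "'a \<Rightarrow> 'b::semiring_1"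
  assumes "finite A" "j \<in> A"
  shows "(\<Sum>l\<in>A. of_bool (j = l) * f l) = f j"
proof -
  have "(\<Sum>l\<in>A-{j}. of_bool (j = l) * f l) = 0"
    by (rule sum.neutral) auto
  then show ?thesis
    using sum.remove[OF assms, of "\<lambda>l. of_bool (j = l) * f l"] by simp
qed

definition perm_on :: "('a \<Rightarrow> 'a \<Rightarrow> 'b::comm_semiring_1) \<Rightarrow> 'a set \<Rightarrow> 'b" where
  "perm_on A J = (\<Sum>p \<in> {p. p permutes J}. \<Prod>x\<in>J. A x (p x))"

definition perm_minor :: "('a \<Rightarrow> 'a \<Rightarrow> 'b::comm_semiring_1) \<Rightarrow> 'a set \<Rightarrow> 'a \<Rightarrow> 'a \<Rightarrow> 'b" where
  "perm_minor A J i j = (\<Sum>p \<in> {p. p permutes J \<and> p i = j}. \<Prod>x\<in>J-{i}. A x (p x))"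

lemma perm_on_expand_row:
  assumes "finite J" "i \<in> J"
  shows "perm_on A J = (\<Sum>j\<in>J. A i j * perm_minor A J i j)"
proof -
  have fin: "finite {p. p permutes J}" using finite_permutations[OF assms(1)] by simp
  have "perm_on A J = (\<Sum>p \<in> {p. p permutes J}. A i (p i) * (\<Prod>x\<in>J-{i}. A x (p x)))"
    unfolding perm_on_def by (rule sum.cong, simp, subst prod.remove[OF assms]) auto
  also have "\<dots> = (\<Sum>j\<in>J. \<Sum>p \<in> {p \<in> {p. p permutes J}. p i = j}. A i (p i) * (\<Prod>x\<in>J-{i}. A x (p x)))"
    by (rule sum.group[symmetric, OF fin assms(1)]) (auto simp: permutes_in_image assms)
  also have "\<dots> = (\<Sum>j\<in>J. A i j * perm_minor A J i j)"
    unfolding perm_minor_def sum_distrib_left by (rule sum.cong, simp, rule sum.cong) auto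
  finally show ?thesis .
qed

lemma permutes_Diff_singleton_iff: "p permutes (J - {i}) \<longleftrightarrow> p permutes J \<and> p i = i"
  by (auto intro: permutes_superset permutes_subset permutes_not_in)

lemma perm_minor_diag: "perm_minor A J i i = perm_on A (J - {i})"
  unfolding perm_minor_def perm_on_def permutes_Diff_singleton_iff by simp

text \<open>Composing with the transposition of \<open>i\<close> and \<open>j\<close> turns the permutations of \<open>J\<close>
  sending \<open>i\<close> to \<open>j\<close> into the permutations of \<open>J - {j}\<close>; the entry of row \<open>j\<close> becomes the
  new entry of row \<open>i\<close>.\<close>

lemma perm_minor_expand_row:
  assumes "finite J" "i \<in> J" "j \<in> J" "i \<noteq> j"
  shows "perm_minor A J i j = (\<Sum>l\<in>J-{j}. A j l * perm_minor A (J-{j}) i l)"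
proof -
  let ?t = "transpose i j"
  have "perm_minor A J i j = (\<Sum>q \<in> {q. q permutes (J-{j})}. A j (q i) * (\<Prod>x\<in>J-{j}-{i}. A x (q x)))"
    unfolding perm_minor_def
  proof (rule sum.reindex_bij_witness[where i = "\<lambda>q. q \<circ> ?t" and j = "\<lambda>p. p \<circ> ?t"])
    fix q assume q: "q \<in> {q. q permutes (J-{j})}"
    show "q \<circ> ?t \<circ> ?t = q" by (rule ext) simp
    have "q permutes J" "q j = j" using q by (simp_all add: permutes_Diff_singleton_iff)
    then show "q \<circ> ?t \<in> {p. p permutes J \<and> p i = j}"
      using permutes_compose[OF permutes_swap_id[OF assms(2,3)]] by simp
  next
    fix p assume p: "p \<in> {p. p permutes J \<and> p i = j}"
    show "p \<circ> ?t \<circ> ?t = p" by (rule ext) simp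
    show "p \<circ> ?t \<in> {q. q permutes (J-{j})}"
      using p permutes_compose[OF permutes_swap_id[OF assms(2,3)]]
      by (simp add: permutes_Diff_singleton_iff)
    have "(\<Prod>x\<in>J-{j}-{i}. A x ((p \<circ> ?t) x)) = (\<Prod>x\<in>J-{i}-{j}. A x (p x))"
      by (rule prod.cong) (auto simp: transpose_def)
    moreover have "(\<Prod>x\<in>J-{i}. A x (p x)) = A j (p j) * (\<Prod>x\<in>J-{i}-{j}. A x (p x))"
      using assms by (subst prod.remove[of _ j]) auto
    ultimately show "A j ((p \<circ> ?t) i) * (\<Prod>x\<in>J-{j}-{i}. A x ((p \<circ> ?t) x)) = (\<Prod>x\<in>J-{i}. A x (p x))"
      by simp
  qed
  also have "\<dots> = (\<Sum>l\<in>J-{j}. \<Sum>q \<in> {q \<in> {q. q permutes (J-{j})}. q i = l}. A j (q i) * (\<Prod>x\<in>J-{j}-{i}. A x (q x)))"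
    using assms finite_permutations[of "J-{j}"] permutes_in_image[of _ "J-{j}" i]
    by (intro sum.group[symmetric]) auto
  also have "\<dots> = (\<Sum>l\<in>J-{j}. A j l * perm_minor A (J-{j}) i l)"
    unfolding perm_minor_def sum_distrib_left by (intro sum.cong) auto
  finally show ?thesis .
qed

lemma perm_on_nonneg:
  fixes A :: "'a \<Rightarrow> 'a \<Rightarrow> 'b::linordered_semidom"
  assumes "\<And>x y. 0 \<le> A x y"
  shows "0 \<le> perm_on A J"
  unfolding perm_on_def using assms by (intro sum_nonneg prod_nonneg) auto

lemma perm_minor_nonneg:
  fixes A :: "'a \<Rightarrow> 'a \<Rightarrow> 'b::linordered_semidom"
  assumes "\<And>x y. 0 \<le> A x y"
  shows "0 \<le> perm_minor A J i j"
  unfolding perm_minor_def using assms by (intro sum_nonneg prod_nonneg) auto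

definition id_plus :: "(nat \<Rightarrow> nat \<Rightarrow> real) \<Rightarrow> nat \<Rightarrow> nat \<Rightarrow> real" where
  "id_plus B x y = of_bool (x = y) + B x y"

lemma id_plus_nonneg: "(\<And>x y. 0 \<le> B x y) \<Longrightarrow> 0 \<le> id_plus B x y"
  unfolding id_plus_def by (simp add: add_nonneg_nonneg)

lemma perm_on_id_plus_Diff_le:
  assumes B: "\<And>x y. 0 \<le> B x y" and J: "finite J" "j \<in> J"
  shows "perm_on (id_plus B) (J - {j}) \<le> perm_on (id_plus B) J"
proof -
  have id_plus_B: "\<And>x y. 0 \<le> id_plus B x y"
    using B by (rule id_plus_nonneg)
  have "0 \<le> B j j * perm_on (id_plus B) (J - {j})"
    using B[of j j] perm_on_nonneg[of "id_plus B", OF id_plus_B] by simp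
  then have "perm_on (id_plus B) (J - {j}) \<le> id_plus B j j * perm_minor (id_plus B) J j j"
    by (simp add: perm_minor_diag id_plus_def distrib_right)
  also have "\<dots> \<le> (\<Sum>l\<in>J. id_plus B j l * perm_minor (id_plus B) J j l)"
    using J id_plus_B by (intro member_le_sum mult_nonneg_nonneg perm_minor_nonneg) auto
  also have "\<dots> = perm_on (id_plus B) J"
    by (rule perm_on_expand_row[OF J, symmetric])
  finally show ?thesis .
qed

text \<open>\<open>walk_weight B k L j\<close> is the total weight of the walks from \<open>j\<close> to \<open>k\<close> of length at most
  \<open>L\<close> whose inner vertices lie below \<open>k\<close>: entry \<open>j\<close> of \<open>(\<Sum>t<L. C ^ t) b\<close>, where \<open>C\<close> is the
  leading \<open>k \<times> k\<close> block of \<open>B\<close> and \<open>b\<close> the upper part of its column \<open>k\<close>.\<close>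

fun walk_weight :: "(nat \<Rightarrow> nat \<Rightarrow> real) \<Rightarrow> nat \<Rightarrow> nat \<Rightarrow> nat \<Rightarrow> real" where
  "walk_weight B k 0 j = 0"
| "walk_weight B k (Suc L) j = B j k + (\<Sum>l<k. B j l * walk_weight B k L l)"

lemma walk_weight_nonneg: "(\<And>x y. 0 \<le> B x y) \<Longrightarrow> 0 \<le> walk_weight B k L j"
  by (induction L arbitrary: j) (auto intro!: add_nonneg_nonneg sum_nonneg mult_nonneg_nonneg)

text \<open>Follow the cycle of the permutation through \<open>k\<close>: row \<open>j\<close> goes either to \<open>k\<close>, closing the
  cycle, or to some \<open>l < k\<close>, which continues the walk.\<close>

lemma perm_minor_le_walk_weight:
  assumes B: "\<And>x y. 0 \<le> B x y" and J: "finite J" "J \<subseteq> {..<k}" "j \<in> J"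
  shows "perm_minor (id_plus B) (insert k J) k j \<le> perm_on (id_plus B) J * walk_weight B k (card J) j"
  using J
proof (induction "card J" arbitrary: J j)
  case 0
  then show ?case by simp
next
  case (Suc n)
  let ?A = "id_plus B"
  define J' where "J' = J - {j}"
  have j: "j < k" "j \<notin> J'" and J': "finite J'" "J' \<subseteq> {..<k}" "k \<notin> J'" "card J' = n"
    using Suc.prems Suc.hyps(2) by (auto simp: J'_def)
  have "insert k J - {j} = insert k J'"
    using j unfolding J'_def by auto
  then have "perm_minor ?A (insert k J) k j = (\<Sum>l\<in>insert k J'. ?A j l * perm_minor ?A (insert k J') k l)"
    using perm_minor_expand_row[of "insert k J" k j ?A] Suc.prems(1,3) j(1) by simp
  also have "\<dots> = B j k * perm_on ?A J' + (\<Sum>l\<in>J'. B j l * perm_minor ?A (insert k J') k l)"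
  proof -
    have "insert k J' - {k} = J'"
      using J'(3) by blast
    moreover have "?A j l = B j l" if "l \<in> J'" for l
      using that j(2) by (auto simp: id_plus_def)
    ultimately show ?thesis
      using J' j(1) by (simp add: perm_minor_diag id_plus_def)
  qed
  also have "\<dots> \<le> B j k * perm_on ?A J' + (\<Sum>l\<in>J'. B j l * (perm_on ?A J' * walk_weight B k n l))"
  proof (intro add_left_mono sum_mono mult_left_mono)
    fix l assume "l \<in> J'"
    then show "perm_minor ?A (insert k J') k l \<le> perm_on ?A J' * walk_weight B k n l"
      using Suc.hyps(1)[of J' l] J' by simp
  qed (use B in simp)
  also have "\<dots> \<le> B j k * perm_on ?A J' + (\<Sum>l<k. B j l * (perm_on ?A J' * walk_weight B k n l))"
    using J' B by (intro add_left_mono sum_mono2 mult_nonneg_nonneg perm_on_nonneg id_plus_nonneg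
        walk_weight_nonneg) auto
  also have "\<dots> = perm_on ?A J' * walk_weight B k (Suc n) j"
    by (simp add: algebra_simps sum_distrib_left)
  also have "\<dots> \<le> perm_on ?A J * walk_weight B k (Suc n) j"
    using Suc.prems B unfolding J'_def
    by (intro mult_right_mono perm_on_id_plus_Diff_le walk_weight_nonneg) auto
  finally show ?case
    using Suc.hyps(2) by simp
qed

lemma perm_on_lessThan_Suc_le:
  assumes B: "\<And>x y. 0 \<le> B x y"
  shows "perm_on (id_plus B) {..<Suc k}
    \<le> perm_on (id_plus B) {..<k} * (1 + B k k + (\<Sum>j<k. B k j * walk_weight B k k j))"
proof -
  let ?A = "id_plus B" and ?P = "perm_on (id_plus B) {..<k}"
  have "perm_on ?A {..<Suc k} = (\<Sum>j\<in>insert k {..<k}. ?A k j * perm_minor ?A (insert k {..<k}) k j)"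
    unfolding lessThan_Suc by (rule perm_on_expand_row) auto
  also have "\<dots> = (1 + B k k) * ?P + (\<Sum>j<k. B k j * perm_minor ?A (insert k {..<k}) k j)"
  proof -
    have "insert k {..<k} - {k} = {..<k}"
      by auto
    moreover have "?A k j = B k j" if "j < k" for j
      using that by (simp add: id_plus_def)
    ultimately show ?thesis
      by (simp add: perm_minor_diag id_plus_def)
  qed
  also have "\<dots> \<le> (1 + B k k) * ?P + (\<Sum>j<k. B k j * (?P * walk_weight B k k j))"
    using perm_minor_le_walk_weight[OF B, of "{..<k}"] B
    by (intro add_left_mono sum_mono mult_left_mono) auto
  also have "\<dots> = ?P * (1 + B k k + (\<Sum>j<k. B k j * walk_weight B k k j))"
    by (simp add: algebra_simps sum_distrib_left)
  finally show ?thesis .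
qed

definition id_minus_mat :: "(nat \<Rightarrow> nat \<Rightarrow> real) \<Rightarrow> nat \<Rightarrow> real mat" where
  "id_minus_mat B k = mat k k (\<lambda>(i, j). of_bool (i = j) - B i j)"

definition lead_minor :: "(nat \<Rightarrow> nat \<Rightarrow> real) \<Rightarrow> nat \<Rightarrow> real" where
  "lead_minor B k = det (id_minus_mat B k)"

lemma id_minus_mat_carrier [simp]: "id_minus_mat B k \<in> carrier_mat k k"
  by (simp add: id_minus_mat_def)

lemma lead_minor_0 [simp]: "lead_minor B 0 = 1"
  unfolding lead_minor_def by (rule det_dim_zero) simp

text \<open>Only the equation \<open>M N = 1\<close> is required of an inverse \<open>N\<close> of the square block \<open>M\<close>.\<close>

definition lead_inverse :: "(nat \<Rightarrow> nat \<Rightarrow> real) \<Rightarrow> nat \<Rightarrow> (nat \<Rightarrow> nat \<Rightarrow> real) \<Rightarrow> bool" where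
  "lead_inverse B k N \<longleftrightarrow>
     (\<forall>i<k. \<forall>j<k. (\<Sum>l<k. (of_bool (i = l) - B i l) * N l j) = of_bool (i = j))"

definition inv_col :: "(nat \<Rightarrow> nat \<Rightarrow> real) \<Rightarrow> nat \<Rightarrow> (nat \<Rightarrow> nat \<Rightarrow> real) \<Rightarrow> nat \<Rightarrow> real" where
  "inv_col B k N i = (\<Sum>l<k. N i l * B l k)"

definition inv_row :: "(nat \<Rightarrow> nat \<Rightarrow> real) \<Rightarrow> nat \<Rightarrow> (nat \<Rightarrow> nat \<Rightarrow> real) \<Rightarrow> nat \<Rightarrow> real" where
  "inv_row B k N j = (\<Sum>l<k. B k l * N l j)"

definition schur_compl :: "(nat \<Rightarrow> nat \<Rightarrow> real) \<Rightarrow> nat \<Rightarrow> (nat \<Rightarrow> nat \<Rightarrow> real) \<Rightarrow> real" where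
  "schur_compl B k N = 1 - B k k - (\<Sum>j<k. B k j * inv_col B k N j)"

text \<open>The inverse of the bordered block \<open>[[M, -b], [-c, 1 - B k k]]\<close> is
  \<open>[[N + u w / s, u / s], [w / s, 1 / s]]\<close>, where \<open>u = N b\<close>, \<open>w = c N\<close> and \<open>s\<close> is the Schur
  complement.\<close>

definition border_inverse :: "(nat \<Rightarrow> nat \<Rightarrow> real) \<Rightarrow> nat \<Rightarrow> (nat \<Rightarrow> nat \<Rightarrow> real) \<Rightarrow> nat \<Rightarrow> nat \<Rightarrow> real"
  where
  "border_inverse B k N i j =
     (if i < k \<and> j < k then N i j else 0)
     + (if i < k then inv_col B k N i else 1) * (if j < k then inv_row B k N j else 1)
       / schur_compl B k N"

lemma inv_col_fixpoint:
  assumes "lead_inverse B k N" "i < k"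
  shows "inv_col B k N i = B i k + (\<Sum>l<k. B i l * inv_col B k N l)"
proof -
  have "(\<Sum>l<k. (of_bool (i = l) - B i l) * inv_col B k N l)
      = (\<Sum>t<k. (\<Sum>l<k. (of_bool (i = l) - B i l) * N l t) * B t k)"
    unfolding inv_col_def sum_distrib_left sum_distrib_right
    by (subst sum.swap) (simp add: mult.assoc)
  also have "\<dots> = (\<Sum>t<k. of_bool (i = t) * B t k)"
    using assms unfolding lead_inverse_def by (intro sum.cong) auto
  also have "\<dots> = B i k"
    using assms(2) by (simp add: sum_of_bool_delta)
  finally have "(\<Sum>l<k. (of_bool (i = l) - B i l) * inv_col B k N l) = B i k" .
  moreover have "(\<Sum>l<k. of_bool (i = l) * inv_col B k N l) = inv_col B k N i"
    using assms(2) by (simp add: sum_of_bool_delta)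
  ultimately show ?thesis
    by (simp add: left_diff_distrib sum_subtractf)
qed

lemma id_minus_mult_extended_inv_col:
  assumes N: "lead_inverse B k N" and "i \<le> k"
  shows "(\<Sum>l<k. (of_bool (i = l) - B i l) * inv_col B k N l) + (of_bool (i = k) - B i k)
    = of_bool (i = k) * schur_compl B k N"
proof (cases "i = k")
  case True
  then show ?thesis
    by (simp add: schur_compl_def sum_negf)
next
  case False
  then have "i < k"
    using assms(2) by simp
  then show ?thesis
    using inv_col_fixpoint[OF N \<open>i < k\<close>] False
    by (simp add: left_diff_distrib sum_subtractf sum_of_bool_delta)
qed

lemma inv_col_nonneg:
  "(\<And>x y. 0 \<le> B x y) \<Longrightarrow> (\<And>i j. i < k \<Longrightarrow> j < k \<Longrightarrow> 0 \<le> N i j) \<Longrightarrow> i < k \<Longrightarrow> 0 \<le> inv_col B k N i"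
  unfolding inv_col_def by (intro sum_nonneg mult_nonneg_nonneg) auto

lemma inv_row_nonneg:
  "(\<And>x y. 0 \<le> B x y) \<Longrightarrow> (\<And>i j. i < k \<Longrightarrow> j < k \<Longrightarrow> 0 \<le> N i j) \<Longrightarrow> j < k \<Longrightarrow> 0 \<le> inv_row B k N j"
  unfolding inv_row_def by (intro sum_nonneg mult_nonneg_nonneg) auto

lemma schur_compl_le_1:
  assumes "\<And>x y. 0 \<le> B x y" "\<And>i j. i < k \<Longrightarrow> j < k \<Longrightarrow> 0 \<le> N i j"
  shows "schur_compl B k N \<le> 1"
proof -
  have "0 \<le> (\<Sum>j<k. B k j * inv_col B k N j)"
    using assms by (intro sum_nonneg mult_nonneg_nonneg inv_col_nonneg) auto
  then show ?thesis
    using assms(1)[of k k] by (simp add: schur_compl_def)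
qed

text \<open>Right multiplication by this unit upper triangular matrix clears column \<open>k\<close> of
  \<open>id_minus_mat B (Suc k)\<close> above the diagonal and leaves the Schur complement on it.\<close>

definition clear_col_mat :: "(nat \<Rightarrow> nat \<Rightarrow> real) \<Rightarrow> nat \<Rightarrow> (nat \<Rightarrow> nat \<Rightarrow> real) \<Rightarrow> real mat" where
  "clear_col_mat B k N =
     mat (Suc k) (Suc k) (\<lambda>(i, j). if i = j then 1 else if j = k then inv_col B k N i else 0)"

lemma det_clear_col_mat: "det (clear_col_mat B k N) = 1"
proof -
  have "upper_triangular (clear_col_mat B k N)"
    unfolding upper_triangular_def clear_col_mat_def by auto
  moreover have "diag_mat (clear_col_mat B k N) = map (\<lambda>i. 1) [0..<Suc k]"
    unfolding diag_mat_def clear_col_mat_def by auto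
  ultimately show ?thesis
    by (simp add: det_upper_triangular[of _ "Suc k"] clear_col_mat_def map_replicate_const
        del: upt_Suc)
qed

lemma id_minus_mat_mult_clear_col_index:
  assumes N: "lead_inverse B k N" and "i \<le> k" "j \<le> k"
  shows "(id_minus_mat B (Suc k) * clear_col_mat B k N) $$ (i, j)
    = (if j = k then of_bool (i = k) * schur_compl B k N else of_bool (i = j) - B i j)"
proof -
  let ?m = "\<lambda>l. of_bool (i = l) - B i l"
  have "(id_minus_mat B (Suc k) * clear_col_mat B k N) $$ (i, j)
      = (\<Sum>l<Suc k. ?m l * (if l = j then 1 else if j = k then inv_col B k N l else 0))"
    using assms(2,3)
    by (simp add: id_minus_mat_def clear_col_mat_def scalar_prod_def atLeast0LessThan)
  also have "\<dots> = (if j = k then of_bool (i = k) * schur_compl B k N else ?m j)"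
  proof (cases "j = k")
    case True
    then have "(\<Sum>l<Suc k. ?m l * (if l = j then 1 else if j = k then inv_col B k N l else 0))
        = (\<Sum>l<k. ?m l * inv_col B k N l) + ?m k"
      by simp
    also have "\<dots> = of_bool (i = k) * schur_compl B k N"
      by (rule id_minus_mult_extended_inv_col[OF N assms(2)])
    finally show ?thesis
      using True by simp
  next
    case False
    then have "(\<Sum>l<Suc k. ?m l * (if l = j then 1 else if j = k then inv_col B k N l else 0))
        = (\<Sum>l<Suc k. of_bool (j = l) * ?m l)"
      by (intro sum.cong) auto
    then show ?thesis
      using False assms(3) by (simp add: sum_of_bool_delta)
  qed
  finally show ?thesis
    by simp
qed

lemma lead_minor_Suc:
  assumes N: "lead_inverse B k N"
  shows "lead_minor B (Suc k) = lead_minor B k * schur_compl B k N"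
proof -
  define F where "F = id_minus_mat B (Suc k) * clear_col_mat B k N"
  have F: "F \<in> carrier_mat (Suc k) (Suc k)"
    unfolding F_def id_minus_mat_def clear_col_mat_def by (rule mult_carrier_mat) auto
  have F_index: "F $$ (i, j)
      = (if j = k then of_bool (i = k) * schur_compl B k N else of_bool (i = j) - B i j)"
    if "i \<le> k" "j \<le> k" for i j
    unfolding F_def by (rule id_minus_mat_mult_clear_col_index[OF N that])
  have "mat_delete F k k = id_minus_mat B k"
    using F F_index by (intro eq_matI) (auto simp: mat_delete_def id_minus_mat_def)
  then have cofactor: "cofactor F k k = lead_minor B k"
    by (simp add: cofactor_def lead_minor_def)
  have "det F = lead_minor B (Suc k) * det (clear_col_mat B k N)"
    unfolding F_def lead_minor_def
    by (rule det_mult[where n = "Suc k"]) (simp_all add: id_minus_mat_def clear_col_mat_def)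
  then have "lead_minor B (Suc k) = det F"
    by (simp add: det_clear_col_mat)
  also have "\<dots> = (\<Sum>i<Suc k. F $$ (i, k) * cofactor F i k)"
    by (rule laplace_expansion_column[OF F]) simp
  also have "\<dots> = F $$ (k, k) * cofactor F k k"
    using F_index by (simp add: lessThan_Suc)
  also have "\<dots> = lead_minor B k * schur_compl B k N"
    using F_index cofactor by simp
  finally show ?thesis .
qed

lemma lead_inverse_border_inverse:
  assumes N: "lead_inverse B k N" and s: "schur_compl B k N \<noteq> 0"
  shows "lead_inverse B (Suc k) (border_inverse B k N)"
  unfolding lead_inverse_def
proof (intro allI impI)
  fix i j assume "i < Suc k" "j < Suc k"
  then have i: "i \<le> k" and j: "j \<le> k"
    by auto
  define s where "s = schur_compl B k N"
  define u where "u l = (if l < k then inv_col B k N l else 1)" for l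
  define w where "w j = (if j < k then inv_row B k N j else 1)" for j
  let ?m = "\<lambda>l. of_bool (i = l) - B i l"
  let ?N = "\<lambda>l. if l < k \<and> j < k then N l j else 0"
  have col: "(\<Sum>l<Suc k. ?m l * u l) = of_bool (i = k) * s"
    using id_minus_mult_extended_inv_col[OF N i] by (simp add: u_def s_def)
  have block: "(\<Sum>l<Suc k. ?m l * ?N l)
      = (if j < k then if i < k then of_bool (i = j) else - inv_row B k N j else 0)"
  proof (cases "j < k \<and> i < k")
    case True
    then show ?thesis
      using N by (simp add: lead_inverse_def)
  next
    case False
    then show ?thesis
      using i by (auto simp: inv_row_def sum_negf)
  qed
  have "(\<Sum>l<Suc k. ?m l * border_inverse B k N l j)
      = (\<Sum>l<Suc k. ?m l * ?N l + ?m l * u l * w j / s)"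
    by (intro sum.cong) (simp_all add: border_inverse_def u_def w_def s_def distrib_left mult.assoc)
  also have "\<dots> = (\<Sum>l<Suc k. ?m l * ?N l) + (\<Sum>l<Suc k. ?m l * u l) * w j / s"
    unfolding sum.distrib sum_distrib_right sum_divide_distrib by (rule refl)
  also have "\<dots> = of_bool (i = j)"
    unfolding block col using i j s by (auto simp: w_def s_def)
  finally show "(\<Sum>l<Suc k. (of_bool (i = l) - B i l) * border_inverse B k N l j) = of_bool (i = j)" .
qed

lemma border_inverse_nonneg:
  assumes "\<And>x y. 0 \<le> B x y" "\<And>i j. i < k \<Longrightarrow> j < k \<Longrightarrow> 0 \<le> N i j" "0 < schur_compl B k N"
  shows "0 \<le> border_inverse B k N i j"
  unfolding border_inverse_def using assms inv_col_nonneg[OF assms(1,2)] inv_row_nonneg[OF assms(1,2)]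
  by (auto intro!: add_nonneg_nonneg divide_nonneg_pos mult_nonneg_nonneg)

lemma walk_weight_le_inv_col:
  assumes B: "\<And>x y. 0 \<le> B x y" and N: "lead_inverse B k N"
    and N_nonneg: "\<And>i j. i < k \<Longrightarrow> j < k \<Longrightarrow> 0 \<le> N i j" and "j < k"
  shows "walk_weight B k L j \<le> inv_col B k N j"
  using \<open>j < k\<close>
proof (induction L arbitrary: j)
  case 0
  then show ?case
    using inv_col_nonneg[OF B N_nonneg] by simp
next
  case (Suc L)
  have "(\<Sum>l<k. B j l * walk_weight B k L l) \<le> (\<Sum>l<k. B j l * inv_col B k N l)"
    using Suc.IH B by (intro sum_mono mult_left_mono) auto
  then show ?case
    using inv_col_fixpoint[OF N Suc.prems] by simp
qed

lemma nonneg_lead_inverse_exists: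
  assumes B: "\<And>x y. 0 \<le> B x y" and pos: "\<And>j. j \<le> k \<Longrightarrow> 0 < lead_minor B j"
  shows "\<exists>N. lead_inverse B k N \<and> (\<forall>i<k. \<forall>j<k. 0 \<le> N i j)"
  using pos
proof (induction k)
  case 0
  show ?case
    by (auto simp: lead_inverse_def)
next
  case (Suc k)
  then obtain N where N: "lead_inverse B k N" and N_nonneg: "\<forall>i<k. \<forall>j<k. 0 \<le> N i j"
    by auto
  have "0 < lead_minor B k * schur_compl B k N"
    using Suc.prems[of "Suc k"] lead_minor_Suc[OF N] by simp
  then have s: "0 < schur_compl B k N"
    using Suc.prems[of k] by (simp add: zero_less_mult_iff)
  show ?case
    using lead_inverse_border_inverse[OF N] border_inverse_nonneg[OF B _ s] s N_nonneg
    by (intro exI[of _ "border_inverse B k N"]) auto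
qed

lemma lead_minor_antimono:
  assumes B: "\<And>x y. 0 \<le> B x y" and pos: "\<And>j. j \<le> n \<Longrightarrow> 0 < lead_minor B j" and "i \<le> n"
  shows "lead_minor B n \<le> lead_minor B i"
  using pos \<open>i \<le> n\<close>
proof (induction n)
  case 0
  then show ?case by simp
next
  case (Suc n)
  obtain N where N: "lead_inverse B n N" and N_nonneg: "\<forall>i<n. \<forall>j<n. 0 \<le> N i j"
    using nonneg_lead_inverse_exists[of B n] B Suc.prems(1) by auto
  have "lead_minor B (Suc n) \<le> lead_minor B n"
    using lead_minor_Suc[OF N] schur_compl_le_1[OF B, of n N] N_nonneg Suc.prems(1)[of n]
    by (simp add: mult_left_le)
  then show ?case
    using Suc by (cases "i = Suc n") auto
qed

text \<open>With \<open>s\<close> the Schur complement of the leading \<open>k \<times> k\<close> block, the permanent grows at most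
  by the factor \<open>2 - s\<close> and the minor changes by the factor \<open>s\<close>, while \<open>(2 - s) s \<le> 1\<close>.\<close>

lemma perm_on_mult_lead_minor_le_1:
  assumes B: "\<And>x y. 0 \<le> B x y" and pos: "\<And>j. j \<le> n \<Longrightarrow> 0 < lead_minor B j"
  shows "perm_on (id_plus B) {..<n} * lead_minor B n \<le> 1"
  using pos
proof (induction n)
  case 0
  then show ?case
    by (simp add: perm_on_def)
next
  case (Suc k)
  obtain N where N: "lead_inverse B k N" and N_nonneg: "\<forall>i<k. \<forall>j<k. 0 \<le> N i j"
    using nonneg_lead_inverse_exists[of B k] B Suc.prems by auto
  define s where "s = schur_compl B k N"
  define P where "P = perm_on (id_plus B) {..<k}"
  define D where "D = lead_minor B k"
  have P: "0 \<le> P"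
    unfolding P_def by (intro perm_on_nonneg id_plus_nonneg B)
  have walks: "(\<Sum>j<k. B k j * walk_weight B k k j) \<le> (\<Sum>j<k. B k j * inv_col B k N j)"
    using N_nonneg walk_weight_le_inv_col[of B k N] B N by (intro sum_mono mult_left_mono) auto
  have "perm_on (id_plus B) {..<Suc k} \<le> P * (1 + B k k + (\<Sum>j<k. B k j * walk_weight B k k j))"
    unfolding P_def by (rule perm_on_lessThan_Suc_le) (rule B)
  also have "\<dots> \<le> P * (2 - s)"
    using walks P unfolding s_def schur_compl_def by (intro mult_left_mono) auto
  finally have "perm_on (id_plus B) {..<Suc k} \<le> P * (2 - s)" .
  then have "perm_on (id_plus B) {..<Suc k} * lead_minor B (Suc k) \<le> P * (2 - s) * lead_minor B (Suc k)"
    using Suc.prems[of "Suc k"] by (intro mult_right_mono) auto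
  also have "\<dots> = (P * D) * ((2 - s) * s)"
    unfolding lead_minor_Suc[OF N] D_def s_def by (simp add: ac_simps)
  also have "\<dots> \<le> P * D"
  proof (rule mult_left_le)
    show "(2 - s) * s \<le> 1"
      using zero_le_square[of "s - 1"] by (simp add: algebra_simps)
    show "0 \<le> P * D"
      using P Suc.prems[of k] by (simp add: D_def)
  qed
  also have "\<dots> \<le> 1"
    using Suc by (simp add: P_def D_def)
  finally show ?case .
qed

lemma continuous_on_lead_minor_scaled:
  "continuous_on UNIV (\<lambda>\<gamma>::real. lead_minor (\<lambda>x y. \<gamma> * B x y) k)"
proof -
  have "lead_minor (\<lambda>x y. \<gamma> * B x y) k = (\<Sum>p\<in>{p. p permutes {0..<k}}.
      signof p * (\<Prod>i=0..<k. of_bool (i = p i) - \<gamma> * B i (p i)))" for \<gamma>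
    unfolding lead_minor_def det_def'[OF id_minus_mat_carrier]
  proof (intro sum.cong refl arg_cong2[where f = "(*)"] prod.cong)
    fix p i assume "p \<in> {p. p permutes {0..<k}}" "i \<in> {0..<k}"
    then have "p i < k"
      using permutes_in_image[of p "{0..<k}" i] by simp
    then show "id_minus_mat (\<lambda>x y. \<gamma> * B x y) k $$ (i, p i) = of_bool (i = p i) - \<gamma> * B i (p i)"
      using \<open>i \<in> {0..<k}\<close> by (simp add: id_minus_mat_def)
  qed
  then show ?thesis
    by (simp only:) (intro continuous_intros)
qed

lemma lead_minor_zero: "lead_minor (\<lambda>_ _. 0) k = 1"
proof -
  have "id_minus_mat (\<lambda>_ _. 0) k = 1\<^sub>m k"
    by (rule eq_matI) (auto simp: id_minus_mat_def)
  then show ?thesis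
    by (simp add: lead_minor_def)
qed

text \<open>The open sets \<open>U\<close> and \<open>V\<close> below are disjoint on \<open>[0, 1]\<close>, since inside \<open>U\<close> the leading
  minors decrease, and cover it, since the last minor never vanishes; as \<open>0 \<in> U\<close>,
  connectedness puts \<open>1\<close> into \<open>U\<close>.\<close>

lemma lead_minors_pos:
  assumes B: "\<And>x y. 0 \<le> B x y"
    and pos: "\<And>\<gamma>. 0 \<le> \<gamma> \<Longrightarrow> \<gamma> \<le> 1 \<Longrightarrow> 0 < lead_minor (\<lambda>x y. \<gamma> * B x y) n"
    and "j \<le> n"
  shows "0 < lead_minor B j"
proof -
  define F where "F j \<gamma> = lead_minor (\<lambda>x y. \<gamma> * B x y) j" for j \<gamma>
  have F_cont: "continuous_on UNIV (F j)" for j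
    unfolding F_def by (rule continuous_on_lead_minor_scaled)
  define U where "U = (\<Inter>j\<in>{..n}. {\<gamma>. 0 < F j \<gamma>})"
  define V where "V = (\<Union>j\<in>{..n}. {\<gamma>. F j \<gamma> < F n \<gamma>})"
  have "open U" "open V"
    unfolding U_def V_def by (auto intro!: open_Collect_less F_cont continuous_on_const)
  moreover have "\<gamma> \<notin> V" if "\<gamma> \<in> U" "0 \<le> \<gamma>" for \<gamma>
  proof -
    have "F n \<gamma> \<le> F j \<gamma>" if "j \<le> n" for j
      using \<open>\<gamma> \<in> U\<close> \<open>0 \<le> \<gamma>\<close> B that unfolding U_def F_def by (intro lead_minor_antimono) auto
    then show ?thesis
      unfolding V_def by (auto simp: not_less)
  qed
  then have "U \<inter> V \<inter> {0..1} = {}"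
    by auto
  moreover have "\<gamma> \<in> U" if "\<gamma> \<in> {0..1}" "\<gamma> \<notin> V" for \<gamma>
  proof -
    have "F n \<gamma> \<le> F j \<gamma>" if "j \<le> n" for j
      using \<open>\<gamma> \<notin> V\<close> that unfolding V_def by (auto simp: not_less)
    moreover have "0 < F n \<gamma>"
      using pos \<open>\<gamma> \<in> {0..1}\<close> by (simp add: F_def)
    ultimately show ?thesis
      unfolding U_def by (auto intro: less_le_trans)
  qed
  then have "{0..1} \<subseteq> U \<union> V"
    by blast
  moreover have "0 \<in> U \<inter> {0..1}"
    by (simp add: U_def F_def lead_minor_zero)
  ultimately have "V \<inter> {0..1} = {}"
    using connectedD[OF connected_Icc, of U V 0 1] by blast
  moreover have "(1::real) \<in> {0..1}"
    by simp
  ultimately have "1 \<in> U"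
    using \<open>{0..1} \<subseteq> U \<union> V\<close> by blast
  then show ?thesis
    using \<open>j \<le> n\<close> by (simp add: U_def F_def)
qed

text \<open>Padding with zeros outside the matrix makes nonnegativity of the entries a global
  property of the function.\<close>

definition entry_fun :: "real mat \<Rightarrow> nat \<Rightarrow> nat \<Rightarrow> real" where
  "entry_fun S x y = (if x < dim_row S \<and> y < dim_col S then S $$ (x, y) else 0)"

lemma id_minus_mat_entry_fun:
  assumes "S \<in> carrier_mat n n"
  shows "id_minus_mat (\<lambda>x y. \<gamma> * entry_fun S x y) n = 1\<^sub>m n - \<gamma> \<cdot>\<^sub>m S"
  using assms by (intro eq_matI) (auto simp: id_minus_mat_def entry_fun_def)

lemma perm_one_plus_smult:
  assumes S: "S \<in> carrier_mat n n"
  shows "perm (1\<^sub>m n + a \<cdot>\<^sub>m S) = perm_on (id_plus (\<lambda>x y. a * entry_fun S x y)) {..<n}"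
proof -
  have "perm (1\<^sub>m n + a \<cdot>\<^sub>m S) = (\<Sum>p\<in>{p. p permutes {..<n}}. \<Prod>i<n. (1\<^sub>m n + a \<cdot>\<^sub>m S) $$ (i, p i))"
    using S by (simp add: perm_def atLeast0LessThan)
  also have "\<dots> = perm_on (id_plus (\<lambda>x y. a * entry_fun S x y)) {..<n}"
    unfolding perm_on_def
  proof (intro sum.cong prod.cong refl)
    fix p i assume "p \<in> {p. p permutes {..<n}}" "i \<in> {..<n}"
    then have "p i < n"
      using permutes_in_image[of p "{..<n}" i] by simp
    then show "(1\<^sub>m n + a \<cdot>\<^sub>m S) $$ (i, p i) = id_plus (\<lambda>x y. a * entry_fun S x y) i (p i)"
      using \<open>i \<in> {..<n}\<close> S by (simp add: id_plus_def entry_fun_def)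
  qed
  finally show ?thesis .
qed

lemma continuous_on_det_one_minus_smult:
  fixes S :: "real mat"
  assumes "S \<in> carrier_mat n n"
  shows "continuous_on UNIV (\<lambda>\<gamma>. det (1\<^sub>m n - \<gamma> \<cdot>\<^sub>m S))"
  using continuous_on_lead_minor_scaled[where B = "entry_fun S" and k = n]
  by (simp add: lead_minor_def id_minus_mat_entry_fun[OF assms])

lemma perm_one_plus_smult_le:
  fixes S :: "real mat"
  assumes S: "S \<in> carrier_mat n n" and S_nonneg: "\<And>i j. i < n \<Longrightarrow> j < n \<Longrightarrow> 0 \<le> S $$ (i, j)"
    and a: "0 \<le> a" and c: "0 < c" "\<And>\<gamma>. 0 \<le> \<gamma> \<Longrightarrow> \<gamma> \<le> a \<Longrightarrow> c < det (1\<^sub>m n - \<gamma> \<cdot>\<^sub>m S)"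
  shows "perm (1\<^sub>m n + a \<cdot>\<^sub>m S) \<le> 1 / c"
proof -
  define B where "B = (\<lambda>x y. a * entry_fun S x y)"
  have B: "0 \<le> B x y" for x y
    using S S_nonneg a by (simp add: B_def entry_fun_def)
  have det_eq: "lead_minor (\<lambda>x y. \<gamma> * B x y) n = det (1\<^sub>m n - (\<gamma> * a) \<cdot>\<^sub>m S)" for \<gamma>
    using id_minus_mat_entry_fun[OF S, of "\<gamma> * a"] by (simp add: lead_minor_def B_def mult.assoc)
  have pos: "0 < lead_minor (\<lambda>x y. \<gamma> * B x y) n" if "0 \<le> \<gamma>" "\<gamma> \<le> 1" for \<gamma>
  proof -
    have "0 \<le> \<gamma> * a" "\<gamma> * a \<le> a"
      using that a by (auto simp: mult_left_le_one_le)
    then show ?thesis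
      using c(1) c(2)[of "\<gamma> * a"] by (simp add: det_eq)
  qed
  have "0 < lead_minor B j" if "j \<le> n" for j
    using lead_minors_pos[of B n, OF B pos that] .
  then have "perm_on (id_plus B) {..<n} * lead_minor B n \<le> 1"
    by (rule perm_on_mult_lead_minor_le_1[of B n, OF B])
  moreover have "c < lead_minor B n"
    using det_eq[of 1] c(2)[of a] a by simp
  moreover have "0 \<le> perm_on (id_plus B) {..<n}"
    using B by (intro perm_on_nonneg id_plus_nonneg)
  ultimately have "perm_on (id_plus B) {..<n} * c \<le> 1"
    by (meson less_imp_le mult_left_mono order_trans)
  then show ?thesis
    using c(1) by (simp add: perm_one_plus_smult[OF S] B_def field_simps)
qed

lemma continuous_on_compact_INF_le:
  fixes f :: "'a::topological_space \<Rightarrow> 'b::{conditionally_complete_linorder, linorder_topology}"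
  assumes "compact K" "continuous_on K f" "x \<in> K"
  shows "(INF y\<in>K. f y) \<le> f x"
proof -
  obtain m where "\<forall>y\<in>K. f m \<le> f y"
    using continuous_attains_inf[OF assms(1) _ assms(2)] assms(3) by blast
  then have "bdd_below (f ` K)"
    by (intro bdd_belowI[of _ "f m"]) auto
  then show ?thesis
    using assms(3) by (rule cINF_lower)
qed

lemma liminf_ereal_pos_eventually_gt:
  fixes f :: "nat \<Rightarrow> real"
  assumes "0 < liminf (\<lambda>n. ereal (f n))"
  obtains c where "0 < c" "\<forall>\<^sub>F n in sequentially. c < f n"
proof -
  obtain c where "0 < ereal c" "ereal c < liminf (\<lambda>n. ereal (f n))"
    using ereal_dense2[OF assms] by blast
  then show ?thesis
    using less_LiminfD that by fastforce
qed

lemma SUP_ereal_less_PInf_if_eventually_le: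
  fixes f :: "nat \<Rightarrow> real"
  assumes "\<forall>\<^sub>F n in sequentially. f n \<le> C"
  shows "(SUP n. ereal (f n)) < \<infinity>"
proof -
  obtain N where N: "\<And>n. n \<ge> N \<Longrightarrow> f n \<le> C"
    using assms unfolding eventually_sequentially by auto
  define K where "K = max C (Max (f ` {..<N}))"
  have "f n \<le> K" for n
    using N[of n] unfolding K_def by (cases "n < N") (auto intro: max.coboundedI2)
  then have "(SUP n. ereal (f n)) \<le> ereal K"
    by (intro SUP_least) simp
  then show ?thesis
    by (rule order_le_less_trans) simp
qed

theorem lemma3p4:
  fixes S :: "nat \<Rightarrow> real mat"
  assumes dims: "\<And>n. S n \<in> carrier_mat n n"
    and nonneg: "\<And>n i j. i < n \<Longrightarrow> j < n \<Longrightarrow> S n $$ (i, j) \<ge> 0"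
    and assumption2: "\<And>\<epsilon>::real. 0 < \<epsilon> \<Longrightarrow> \<epsilon> \<le> 1 \<Longrightarrow>
       liminf (\<lambda>n. ereal (INF \<gamma>\<in>{0..1-\<epsilon>}. det (1\<^sub>m n - \<gamma> \<cdot>\<^sub>m S n))) > 0"
    and eps: "0 < \<epsilon>" "\<epsilon> \<le> (1::real)"
  shows "(SUP n. ereal (perm (1\<^sub>m n + (1 - \<epsilon>) \<cdot>\<^sub>m S n))) < \<infinity>"
proof -
  obtain c where c: "0 < c"
    and eventually_c: "\<forall>\<^sub>F n in sequentially. c < (INF \<gamma>\<in>{0..1-\<epsilon>}. det (1\<^sub>m n - \<gamma> \<cdot>\<^sub>m S n))"
    using liminf_ereal_pos_eventually_gt[OF assumption2[OF eps]] by blast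
  have "\<forall>\<^sub>F n in sequentially. perm (1\<^sub>m n + (1 - \<epsilon>) \<cdot>\<^sub>m S n) \<le> 1 / c"
    using eventually_c
  proof (rule eventually_mono)
    fix n assume n: "c < (INF \<gamma>\<in>{0..1-\<epsilon>}. det (1\<^sub>m n - \<gamma> \<cdot>\<^sub>m S n))"
    have "continuous_on {0..1-\<epsilon>} (\<lambda>\<gamma>. det (1\<^sub>m n - \<gamma> \<cdot>\<^sub>m S n))"
      using continuous_on_det_one_minus_smult[OF dims] continuous_on_subset by blast
    then have "c < det (1\<^sub>m n - \<gamma> \<cdot>\<^sub>m S n)" if "0 \<le> \<gamma>" "\<gamma> \<le> 1 - \<epsilon>" for \<gamma>
      using n that continuous_on_compact_INF_le[OF compact_Icc] by fastforce
    then show "perm (1\<^sub>m n + (1 - \<epsilon>) \<cdot>\<^sub>m S n) \<le> 1 / c"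
      using dims nonneg eps c by (intro perm_one_plus_smult_le) auto
  qed
  then show ?thesis
    by (rule SUP_ereal_less_PInf_if_eventually_le)
qed

end
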